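(* The normalizer of $\widehat{\operatorname{PC}^{+}_{\mathrm{rc}}}$ in $\widehat{\operatorname{PC}^{\bowtie}}$ is $\widehat{\operatorname{PC}^{+}_{\mathrm{rc}}}$.
   Context: $X=[0,1[$. $\widehat{\operatorname{PC}^{\bowtie}}$ is the group of bijections $X\to X$ continuous outside a finite subset; $\widehat{\operatorname{PC}^{+}}$ is the subgroup of those $h$ for which there is a finite partition of $X$ into intervals $[a,b[$ with $h$ continuous and increasing on each $]a,b[$; $\widehat{\operatorname{PC}^{+}_{\mathrm{rc}}}$ is the subgroup of right-continuous elements of $\widehat{\operatorname{PC}^{+}}$. *)

theory Defs
  imports "HOL-Analysis.Analysis"
begin

text \<open>The interval X = [0,1[. Bijections of X are represented as functions
  real \<Rightarrow> real that are bijective on X and equal to the identity outside X,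
  so that composition and the group inverse are the usual ones.\<close>

definition XI :: "real set" where
  "XI = {0..<1}"

definition bijX :: "(real \<Rightarrow> real) set" where
  "bijX = {f. bij_betw f XI XI \<and> (\<forall>x. x \<notin> XI \<longrightarrow> f x = x)}"

definition invX :: "(real \<Rightarrow> real) \<Rightarrow> (real \<Rightarrow> real)" where
  "invX g = (\<lambda>y. if y \<in> XI then inv_into XI g y else y)"

definition PC_bowtie :: "(real \<Rightarrow> real) set" where
  "PC_bowtie = {f \<in> bijX. \<exists>F. finite F \<and>
      (\<forall>x \<in> XI - F. continuous (at x within XI) f)}"

definition PC_plus :: "(real \<Rightarrow> real) set" where
  "PC_plus = {f \<in> PC_bowtie. \<exists>(p :: nat \<Rightarrow> real) (n :: nat).
      p 0 = 0 \<and> p n = 1 \<and> (\<forall>i<n. p i < p (Suc i)) \<and>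
      (\<forall>i<n. continuous_on {p i<..<p (Suc i)} f \<and> mono_on {p i<..<p (Suc i)} f)}"

definition PC_plus_rc :: "(real \<Rightarrow> real) set" where
  "PC_plus_rc = {f \<in> PC_plus. \<forall>x \<in> XI. continuous (at_right x) f}"

definition normalizerX :: "(real \<Rightarrow> real) set \<Rightarrow> (real \<Rightarrow> real) set \<Rightarrow> (real \<Rightarrow> real) set" where
  "normalizerX G H = {g \<in> G. (\<lambda>h. g \<circ> h \<circ> invX g) ` H = H}"

end

theory Submission
  imports Defs
begin

text \<open>Elements of \<open>PC_plus_rc\<close> are the bijections of \<open>X\<close> that have a finite set of
  breaks between which they are continuous and increasing, right continuity at the breaks
  included. Breaks of a composite or of an inverse are controlled by those of the factors,
  so \<open>PC_plus_rc\<close> is a group and lies in its normalizer.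

  Conversely let \<open>g\<close> normalize \<open>PC_plus_rc\<close>. Since \<open>PC_plus_rc\<close> contains the maps
  swapping the two halves of any interval \<open>[u, b[\<close>, conjugation shows that for every
  \<open>x\<close> and every \<open>b > g x\<close> the map \<open>g\<close> takes values in \<open>]g x, b[\<close> arbitrarily close
  to the right of \<open>x\<close>. Together with continuity outside a finite set, this forces \<open>g\<close> to be
  right continuous and increasing between its discontinuities.\<close>

section \<open>Continuous monotone functions on real intervals\<close>

lemma continuous_mono_on_image_Icc:
  fixes g :: "real \<Rightarrow> real"
  assumes cont: "continuous_on {x..y} g" and mono: "mono_on {x..y} g" and "x \<le> y"
  shows "g ` {x..y} = {g x..g y}"
proof
  show "g ` {x..y} \<subseteq> {g x..g y}"
    using mono_onD[OF mono] \<open>x \<le> y\<close> by fastforce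
  show "{g x..g y} \<subseteq> g ` {x..y}"
    using IVT'[OF _ _ \<open>x \<le> y\<close> cont] by fastforce
qed

lemma continuous_strict_mono_on_Icc_inverse:
  fixes g h :: "real \<Rightarrow> real"
  assumes cont: "continuous_on {x..y} g" and mono: "strict_mono_on {x..y} g"
    and "x \<le> y" and inv: "\<And>t. t \<in> {x..y} \<Longrightarrow> h (g t) = t"
  shows "continuous_on {g x..g y} h" "strict_mono_on {g x..g y} h"
proof -
  have img: "g ` {x..y} = {g x..g y}"
    using continuous_mono_on_image_Icc[OF cont strict_mono_on_imp_mono_on[OF mono] \<open>x \<le> y\<close>] .
  show "continuous_on {g x..g y} h"
    using continuous_on_inv[OF cont compact_Icc] inv img by simp
  show "strict_mono_on {g x..g y} h"
  proof (rule strict_mono_onI)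
    fix r s assume "r \<in> {g x..g y}" "s \<in> {g x..g y}" "r < s"
    then obtain r' s' where "r' \<in> {x..y}" "s' \<in> {x..y}" "r = g r'" "s = g s'"
      by (metis img imageE)
    with \<open>r < s\<close> show "h r < h s"
      using strict_mono_on_less[OF mono] inv by auto
  qed
qed

lemma strict_mono_image_atLeastLessThan:
  fixes g :: "real \<Rightarrow> real"
  assumes "x < c" and bdd: "bdd_above (g ` {x..<c})"
    and piece: "\<And>t. t \<in> {x<..<c} \<Longrightarrow> continuous_on {x..t} g \<and> strict_mono_on {x..t} g"
  shows "g ` {x..<c} = {g x..<Sup (g ` {x..<c})}"
proof
  have below_Sup: "g t < Sup (g ` {x..<c})" if "t \<in> {x..<c}" for t
  proof -
    define t' where "t' = (t + c) / 2"
    have "t' \<in> {x<..<c}" "t < t'"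
      using that by (auto simp: t'_def)
    then have "g t < g t'"
      using piece strict_mono_onD that by fastforce
    also have "g t' \<le> Sup (g ` {x..<c})"
      using bdd \<open>t' \<in> {x<..<c}\<close> by (auto intro: cSup_upper)
    finally show ?thesis .
  qed
  show "g ` {x..<c} \<subseteq> {g x..<Sup (g ` {x..<c})}"
    using below_Sup piece strict_mono_on_leD
    by (fastforce simp: less_eq_real_def[of x])
  show "{g x..<Sup (g ` {x..<c})} \<subseteq> g ` {x..<c}"
  proof
    fix v assume v: "v \<in> {g x..<Sup (g ` {x..<c})}"
    then obtain t where t: "t \<in> {x..<c}" "v < g t"
      using \<open>x < c\<close> bdd by (auto simp: less_cSup_iff)
    then have "x < t"
      using v by (cases "t = x") auto
    then obtain s where "x \<le> s" "s \<le> t" "g s = v"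
      using IVT'[of g x v t] piece t v by auto
    then show "v \<in> g ` {x..<c}"
      using t by auto
  qed
qed

lemma right_continuous_mono_on_le:
  fixes f :: "real \<Rightarrow> real"
  assumes "continuous (at_right a) f" and "mono_on {a<..<c} f" and "y \<in> {a<..<c}"
  shows "f a \<le> f y"
proof -
  have "(f \<longlongrightarrow> f a) (at_right a)"
    using assms(1) by (simp add: continuous_within)
  moreover have "eventually (\<lambda>t. f t \<le> f y) (at_right a)"
    unfolding eventually_at_right_field
    using assms(3) by (intro exI[of _ y]) (auto intro!: mono_onD[OF assms(2)])
  ultimately show ?thesis
    by (rule tendsto_upperbound) simp
qed

lemma continuous_strict_mono_on_Icc_within_piece:
  fixes f :: "real \<Rightarrow> real"
  assumes cont: "continuous_on {p<..<q} f" and mono: "mono_on {p<..<q} f"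
    and rc: "continuous (at_right a) f" and inj: "inj_on f {a..b}"
    and "p \<le> a" "a < b" "b < q"
  shows "continuous_on {a..b} f" "strict_mono_on {a..b} f"
proof -
  have isCont: "isCont f x" if "x \<in> {a<..b}" for x
  proof -
    have "x \<in> {p<..<q}"
      using that assms(5-7) by auto
    then show ?thesis
      using cont continuous_on_eq_continuous_at open_greaterThanLessThan by blast
  qed
  show "continuous_on {a..b} f"
    unfolding continuous_on_eq_continuous_within
  proof
    fix x assume "x \<in> {a..b}"
    then consider "x = a" | "x \<in> {a<..b}"
      by fastforce
    then show "continuous (at x within {a..b}) f"
      by cases (use rc at_within_Icc_at_right[OF \<open>a < b\<close>] isCont
          continuous_at_imp_continuous_at_within in auto)
  qed
  have "mono_on {a..b} f"
  proof (rule mono_onI)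
    fix r s assume rs: "r \<in> {a..b}" "s \<in> {a..b}" "r \<le> s"
    show "f r \<le> f s"
    proof (cases "r = a \<and> r < s")
      case True
      then show ?thesis
        using right_continuous_mono_on_le[OF rc mono_on_subset[OF mono], of q s] rs assms(5-7)
        by force
    next
      case False
      then show ?thesis
        using rs assms(5-7) by (cases "r = s") (auto intro!: mono_onD[OF mono])
    qed
  qed
  then show "strict_mono_on {a..b} f"
    using inj by (rule mono_imp_strict_mono)
qed

lemma right_continuous_fixed_point:
  fixes k :: "real \<Rightarrow> real"
  assumes "continuous (at_right x) k" and "0 < d" and "\<And>y. y \<in> {x<..<x + d} \<Longrightarrow> k y = y"
  shows "k x = x"
proof -
  have "(k \<longlongrightarrow> k x) (at_right x)"
    using assms(1) by (simp add: continuous_within)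
  moreover have "eventually (\<lambda>y. y = k y) (at_right x)"
    unfolding eventually_at_right_field using assms(2,3) by (auto intro!: exI[of _ "x + d"])
  then have "(k \<longlongrightarrow> x) (at_right x)"
    by (rule Lim_transform_eventually[OF tendsto_ident_at])
  ultimately show ?thesis
    using tendsto_unique[OF trivial_limit_at_right_real] by blast
qed

lemma right_increasing_imp_le:
  fixes g :: "real \<Rightarrow> real"
  assumes cont: "continuous_on {s..t} g" and "s \<le> t"
    and right_incr: "\<And>x d. x \<in> {s..<t} \<Longrightarrow> 0 < d \<Longrightarrow> \<exists>y. x < y \<and> y < x + d \<and> g x < g y"
  shows "g s \<le> g t"
proof (rule ccontr)
  assume "\<not> g s \<le> g t"
  define S where "S = {x \<in> {s..t}. g s \<le> g x}"
  have "closed S"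
    unfolding S_def by (intro continuous_on_closed_Collect_le continuous_on_const cont) simp
  moreover have "S \<noteq> {}" "bdd_above S"
    using \<open>s \<le> t\<close> by (auto simp: S_def bdd_above_def)
  ultimately have "Sup S \<in> S"
    by (rule closed_contains_Sup[rotated 2])
  with \<open>\<not> g s \<le> g t\<close> have "Sup S \<in> {s..<t}" "g s \<le> g (Sup S)"
    by (auto simp: S_def less_eq_real_def)
  then obtain y where "Sup S < y" "y < t" "g (Sup S) < g y"
    using right_incr[of "Sup S" "t - Sup S"] by auto
  then have "y \<in> S"
    using \<open>Sup S \<in> S\<close> \<open>g s \<le> g (Sup S)\<close> by (auto simp: S_def)
  with \<open>bdd_above S\<close> \<open>Sup S < y\<close> show False
    using cSup_upper by fastforce
qed

lemma right_continuous_if_approach_from_above: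
  fixes g :: "real \<Rightarrow> real"
  assumes "a < b" and mono: "mono_on {a<..b} g"
    and approach: "\<And>B d. g a < B \<Longrightarrow> 0 < d \<Longrightarrow> \<exists>y. a < y \<and> y < a + d \<and> g a < g y \<and> g y < B"
  shows "continuous (at_right a) g"
  unfolding continuous_within tendsto_iff
proof (intro allI impI)
  fix e :: real assume "0 < e"
  then obtain x1 where x1: "a < x1" "x1 < b" "g a < g x1" "g x1 < g a + e"
    using approach[of "g a + e" "b - a"] \<open>a < b\<close> by auto
  have "dist (g x) (g a) < e" if x: "a < x" "x < x1" for x
  proof -
    obtain x' where "a < x'" "x' < x" "g a < g x'"
      using approach[of "g a + 1" "x - a"] x by auto
    moreover have "g x' \<le> g x" "g x \<le> g x1"
      using mono_onD[OF mono] x x1 calculation by auto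
    ultimately show ?thesis
      using x1 by (auto simp: dist_real_def)
  qed
  then show "eventually (\<lambda>x. dist (g x) (g a) < e) (at_right a)"
    unfolding eventually_at_right_field using x1 by blast
qed

lemma continuous_strict_mono_on_Icc_if_right_approach:
  fixes g :: "real \<Rightarrow> real"
  assumes "a < b" and inj: "inj_on g {a..b}"
    and cont: "\<And>x. x \<in> {a<..b} \<Longrightarrow> continuous (at x within {a..b}) g"
    and approach: "\<And>x B d. x \<in> {a..<b} \<Longrightarrow> g x < B \<Longrightarrow> 0 < d \<Longrightarrow>
      \<exists>y. x < y \<and> y < x + d \<and> g x < g y \<and> g y < B"
  shows "continuous_on {a..b} g" "strict_mono_on {a..b} g"
proof -
  have le: "g r \<le> g s" if "a \<le> r" "r \<le> s" "s \<le> b" "continuous_on {r..s} g" for r s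
    using right_increasing_imp_le[OF that(4,2)] approach[of _ "g _ + 1"] that(1,3)
    by (meson atLeastLessThan_iff less_add_one order.trans order_less_le_trans)
  have "continuous_on {r..s} g" if "a < r" "s \<le> b" for r s
    using cont that continuous_within_subset[of _ "{a..b}" g "{r..s}"]
    by (auto simp: continuous_on_eq_continuous_within)
  then have "mono_on {a<..b} g"
    using le by (intro mono_onI) auto
  then have "continuous (at_right a) g"
    using right_continuous_if_approach_from_above[OF \<open>a < b\<close>] approach \<open>a < b\<close> by simp
  then show cont_all: "continuous_on {a..b} g"
    unfolding continuous_on_eq_continuous_within
    using cont at_within_Icc_at_right[OF \<open>a < b\<close>]
    by (metis atLeastAtMost_iff greaterThanAtMost_iff order_le_less)
  have "mono_on {a..b} g"
    using le continuous_on_subset[OF cont_all] by (intro mono_onI) auto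
  then show "strict_mono_on {a..b} g"
    using inj by (rule mono_imp_strict_mono)
qed

lemma partition_cover:
  fixes p :: "nat \<Rightarrow> real"
  assumes "p 0 \<le> a" "a < p n"
  shows "\<exists>i<n. p i \<le> a \<and> a < p (Suc i)"
  using assms(2)
proof (induction n)
  case (Suc n)
  then show ?case
    by (cases "a < p n") (auto intro: less_SucI)
qed (use assms(1) in simp)

lemma strict_sorted_nth_less_iff:
  fixes xs :: "'a::linorder list"
  assumes "sorted_wrt (<) xs" "i < length xs" "j < length xs"
  shows "xs ! i < xs ! j \<longleftrightarrow> i < j"
proof -
  have "strict_mono_on {..<length xs} (nth xs)"
    using assms(1) by (auto intro!: strict_mono_onI simp: sorted_wrt_nth_less)
  then show ?thesis
    using assms(2,3) strict_mono_on_less by blast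
qed

lemma finite_avoiding_partition:
  assumes "finite C"
  obtains p :: "nat \<Rightarrow> real" and n where "p 0 = 0" "p n = 1" "\<forall>i<n. p i < p (Suc i)"
    "\<forall>i<n. {p i<..<p (Suc i)} \<subseteq> {0<..<1} - C"
proof -
  define D where "D = insert 0 (insert 1 (C \<inter> {0<..<1}))"
  define L where "L = sorted_list_of_set D"
  define n where "n = length L - 1"
  have "finite D"
    using assms by (simp add: D_def)
  then have setL: "set L = D" and sorted: "sorted_wrt (<) L"
    by (simp_all add: L_def)
  note less_iff = strict_sorted_nth_less_iff[OF sorted]
  have D01: "d \<in> {0..1}" if "d \<in> D" for d
    using that by (auto simp: D_def)
  have nth_D: "L ! i \<in> D" if "i < length L" for i
    using that setL nth_mem by blast
  obtain i0 i1 where i0: "i0 < length L" "L ! i0 = 0" and i1: "i1 < length L" "L ! i1 = 1"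
    using setL by (metis D_def insertI1 insertI2 in_set_conv_nth)
  have "0 < length L" "L \<noteq> []"
    using i0(1) by auto
  then have n: "n < length L"
    by (simp add: n_def)
  have "L ! 0 = 0"
    using less_iff[of i0 0] i0 D01[OF nth_D[OF \<open>0 < length L\<close>]] \<open>L \<noteq> []\<close>
    by (cases "i0 = 0") auto
  moreover have "L ! n = 1"
    using less_iff[of n i1] i1 D01[OF nth_D[OF n]] n by (cases "i1 = n") (auto simp: n_def)
  moreover have "\<forall>i<n. L ! i < L ! (Suc i)"
    using less_iff n by (auto simp: n_def)
  moreover have "{L ! i<..<L ! Suc i} \<subseteq> {0<..<1} - C" if "i < n" for i
  proof
    fix t assume t: "t \<in> {L ! i<..<L ! Suc i}"
    have "0 \<le> L ! i" "L ! Suc i \<le> 1"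
      using D01 nth_D that n by auto
    with t have "t \<in> {0<..<1}"
      by auto
    moreover have "t \<notin> C"
    proof
      assume "t \<in> C"
      with \<open>t \<in> {0<..<1}\<close> obtain j where "j < length L" "L ! j = t"
        using setL by (metis D_def IntI insertI2 in_set_conv_nth)
      then show False
        using t less_iff[of i j] less_iff[of j "Suc i"] that n by auto
    qed
    ultimately show "t \<in> {0<..<1} - C"
      by blast
  qed
  ultimately show thesis
    using that by blast
qed

lemma finite_next_break:
  fixes x :: real
  assumes "finite C" "x < 1"
  obtains c where "x < c" "c \<le> 1" "c = 1 \<or> c \<in> C" "{x<..<c} \<inter> C = {}"
proof
  define c where "c = Min (insert 1 {c \<in> C. x < c})"
  have fin: "finite (insert 1 {c \<in> C. x < c})"
    using assms(1) by simp
  show "x < c" "c \<le> 1"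
    using fin assms(2) by (auto simp: c_def)
  show "c = 1 \<or> c \<in> C"
    using Min_in[OF fin] by (auto simp: c_def)
  show "{x<..<c} \<inter> C = {}"
    using Min_le[OF fin] by (force simp: c_def)
qed

section \<open>Bijections of X\<close>

lemma XI_iff: "x \<in> XI \<longleftrightarrow> 0 \<le> x \<and> x < 1"
  by (simp add: XI_def)

lemma bijX_inj_on: "f \<in> bijX \<Longrightarrow> inj_on f XI"
  by (auto simp: bijX_def bij_betw_def)

lemma bijX_image: "f \<in> bijX \<Longrightarrow> f ` XI = XI"
  by (auto simp: bijX_def bij_betw_def)

lemma bijX_mem: "f \<in> bijX \<Longrightarrow> x \<in> XI \<Longrightarrow> f x \<in> XI"
  using bijX_image by blast

lemma bijX_eq_iff: "f \<in> bijX \<Longrightarrow> x \<in> XI \<Longrightarrow> y \<in> XI \<Longrightarrow> f x = f y \<longleftrightarrow> x = y"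
  using bijX_inj_on inj_on_eq_iff by metis

lemma invX_apply: "f \<in> bijX \<Longrightarrow> x \<in> XI \<Longrightarrow> invX f (f x) = x"
  by (simp add: invX_def bijX_mem bijX_inj_on inv_into_f_f)

lemma apply_invX: "f \<in> bijX \<Longrightarrow> y \<in> XI \<Longrightarrow> f (invX f y) = y"
  by (simp add: invX_def bijX_image f_inv_into_f)

lemma invX_mem: "f \<in> bijX \<Longrightarrow> y \<in> XI \<Longrightarrow> invX f y \<in> XI"
  by (simp add: invX_def bijX_image inv_into_into)

lemma comp_invX:
  assumes "f \<in> bijX"
  shows "f \<circ> invX f = id"
proof
  fix y
  show "(f \<circ> invX f) y = id y"
    using assms apply_invX[OF assms, of y] by (cases "y \<in> XI") (auto simp: invX_def bijX_def)
qed

lemma bijX_comp: "f \<in> bijX \<Longrightarrow> g \<in> bijX \<Longrightarrow> f \<circ> g \<in> bijX"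
  unfolding bijX_def by (auto intro: bij_betw_trans)

lemma bijX_invX: "f \<in> bijX \<Longrightarrow> invX f \<in> bijX"
  unfolding bijX_def invX_def
  by (auto intro: bij_betw_inv_into bij_betw_cong[THEN iffD1, rotated])

lemma conjugation_image_eq:
  assumes "H \<subseteq> bijX" and comp: "\<And>f h. f \<in> H \<Longrightarrow> h \<in> H \<Longrightarrow> f \<circ> h \<in> H"
    and inv: "\<And>f. f \<in> H \<Longrightarrow> invX f \<in> H" and "g \<in> H"
  shows "(\<lambda>h. g \<circ> h \<circ> invX g) ` H = H"
proof
  show "(\<lambda>h. g \<circ> h \<circ> invX g) ` H \<subseteq> H"
    using comp inv \<open>g \<in> H\<close> by blast
  show "H \<subseteq> (\<lambda>h. g \<circ> h \<circ> invX g) ` H"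
  proof
    fix h assume "h \<in> H"
    have "g \<circ> (invX g \<circ> h \<circ> g) \<circ> invX g = (g \<circ> invX g) \<circ> h \<circ> (g \<circ> invX g)"
      by (simp add: comp_assoc)
    then have "h = g \<circ> (invX g \<circ> h \<circ> g) \<circ> invX g"
      using comp_invX \<open>g \<in> H\<close> \<open>H \<subseteq> bijX\<close> by auto
    moreover have "invX g \<circ> h \<circ> g \<in> H"
      using comp inv \<open>g \<in> H\<close> \<open>h \<in> H\<close> by blast
    ultimately show "h \<in> (\<lambda>h. g \<circ> h \<circ> invX g) ` H"
      by (rule image_eqI)
  qed
qed

section \<open>Break points\<close>

text \<open>The intervals \<open>[x, y]\<close> may start at a break \<open>x \<in> C\<close>; this encodes right
  continuity at the breaks.\<close>

definition rc_breaks :: "real set \<Rightarrow> (real \<Rightarrow> real) \<Rightarrow> bool" where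
  "rc_breaks C f \<longleftrightarrow> finite C \<and> 0 \<in> C \<and>
    (\<forall>x y. 0 \<le> x \<longrightarrow> x < y \<longrightarrow> y < 1 \<longrightarrow> {x<..y} \<inter> C = {} \<longrightarrow>
      continuous_on {x..y} f \<and> strict_mono_on {x..y} f)"

lemma rc_breaksD:
  assumes "rc_breaks C f" "0 \<le> x" "x < y" "y < 1" "{x<..y} \<inter> C = {}"
  shows "continuous_on {x..y} f" "strict_mono_on {x..y} f"
  using assms unfolding rc_breaks_def by blast+

lemma rc_breaks_near:
  assumes fC: "rc_breaks C f" and "x \<in> XI"
  obtains e where "0 < e" "continuous_on {x..x + e} f" "strict_mono_on {x..x + e} f"
    and "x \<notin> C \<Longrightarrow> 0 \<le> x - e \<and> continuous_on {x - e..x + e} f \<and> strict_mono_on {x - e..x + e} f"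
proof -
  have "finite C" "0 \<in> C"
    using fC by (auto simp: rc_breaks_def)
  then obtain \<delta> where \<delta>: "0 < \<delta>" "\<And>c. c \<in> C \<Longrightarrow> c \<noteq> x \<Longrightarrow> \<delta> \<le> \<bar>x - c\<bar>"
    using finite_set_avoid[of C x] by (auto simp: dist_real_def)
  define e where "e = min \<delta> (1 - x) / 2"
  have e: "0 < e" "e < \<delta>" "x + e < 1"
    using \<delta>(1) \<open>x \<in> XI\<close> unfolding e_def min_def by (auto simp: XI_iff field_simps)
  have gap: "c = x" if "c \<in> C" "x - e < c" "c \<le> x + e" for c
    using \<delta>(2)[OF that(1)] e(2) that(2,3) by fastforce
  show thesis
  proof
    show "continuous_on {x..x + e} f" "strict_mono_on {x..x + e} f"
      using rc_breaksD[OF fC, of x "x + e"] e gap \<open>x \<in> XI\<close> by (force simp: XI_iff)+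
    assume "x \<notin> C"
    then have "0 \<le> x - e"
      using \<delta>(2)[OF \<open>0 \<in> C\<close>] e(2) \<open>0 \<in> C\<close> \<open>x \<in> XI\<close> by (cases "x = 0") (auto simp: XI_iff)
    then show "0 \<le> x - e \<and> continuous_on {x - e..x + e} f \<and> strict_mono_on {x - e..x + e} f"
      using rc_breaksD[OF fC, of "x - e" "x + e"] e gap \<open>x \<notin> C\<close> by force
  qed (use e in auto)
qed

lemma rc_breaks_isCont:
  assumes "rc_breaks C f" "x \<in> XI - C"
  shows "isCont f x"
proof -
  obtain e where "0 < e" "continuous_on {x - e..x + e} f"
    using rc_breaks_near[OF assms(1), of x] assms(2) by blast
  then show ?thesis
    using continuous_on_interior[of "{x - e..x + e}" f x] by auto
qed

lemma rc_breaks_right_continuous: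
  assumes "rc_breaks C f" "x \<in> XI"
  shows "continuous (at_right x) f"
proof -
  obtain e where "0 < e" "continuous_on {x..x + e} f"
    using rc_breaks_near[OF assms] by blast
  then have "continuous (at x within {x..x + e}) f"
    by (simp add: continuous_on_eq_continuous_within)
  then show ?thesis
    using at_within_Icc_at_right[of x "x + e"] \<open>0 < e\<close> by simp
qed

lemma rc_breaks_open_piece:
  assumes fC: "rc_breaks C f" and piece: "{p<..<q} \<subseteq> {0<..<1} - C"
  shows "continuous_on {p<..<q} f" "mono_on {p<..<q} f"
proof -
  show "continuous_on {p<..<q} f"
    using rc_breaks_isCont[OF fC] piece by (intro continuous_at_imp_continuous_on) (auto simp: XI_iff)
  show "mono_on {p<..<q} f"
  proof (rule mono_onI)
    fix r s assume rs: "r \<in> {p<..<q}" "s \<in> {p<..<q}" "r \<le> s"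
    have sub: "{r..s} \<subseteq> {0<..<1} - C"
      using rs by (intro subset_trans[OF _ piece]) auto
    moreover have "{r<..s} \<subseteq> {r..s}"
      by auto
    ultimately have "0 \<le> r" "s < 1" "{r<..s} \<inter> C = {}"
      using rs(3) by fastforce+
    then have "r < s \<Longrightarrow> strict_mono_on {r..s} f"
      using rc_breaksD(2)[OF fC, of r s] by blast
    then show "f r \<le> f s"
      using rs(3) strict_mono_on_leD[of "{r..s}" f r s] by (cases "r = s") auto
  qed
qed

lemma PC_plus_rc_if_rc_breaks:
  assumes f: "f \<in> bijX" and fC: "rc_breaks C f"
  shows "f \<in> PC_plus_rc"
proof -
  have "finite C"
    using fC by (simp add: rc_breaks_def)
  have "continuous (at x within XI) f" if "x \<in> XI - C" for x
    using rc_breaks_isCont[OF fC that] by (rule continuous_at_imp_continuous_at_within)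
  then have "f \<in> PC_bowtie"
    unfolding PC_bowtie_def using f \<open>finite C\<close> by blast
  moreover obtain p n where "p 0 = 0" "p n = 1" "\<forall>i<n. p i < p (Suc i)"
    and "\<forall>i<n. {p i<..<p (Suc i)} \<subseteq> {0<..<1} - C"
    using finite_avoiding_partition[OF \<open>finite C\<close>] by blast
  then have "\<forall>i<n. continuous_on {p i<..<p (Suc i)} f \<and> mono_on {p i<..<p (Suc i)} f"
    using rc_breaks_open_piece[OF fC] by blast
  ultimately have "f \<in> PC_plus"
    unfolding PC_plus_def using \<open>p 0 = 0\<close> \<open>p n = 1\<close> \<open>\<forall>i<n. p i < p (Suc i)\<close> by blast
  then show ?thesis
    unfolding PC_plus_rc_def using rc_breaks_right_continuous[OF fC] by blast
qed

lemma rc_breaks_if_PC_plus_rc: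
  assumes f: "f \<in> PC_plus_rc"
  shows "\<exists>C. rc_breaks C f"
proof -
  have inj: "inj_on f XI" and rc: "\<forall>x\<in>XI. continuous (at_right x) f"
    using f bijX_inj_on by (auto simp: PC_plus_rc_def PC_plus_def PC_bowtie_def)
  obtain p n where p0: "p 0 = 0" and pn: "p n = 1"
    and pieces: "\<forall>i<n. continuous_on {p i<..<p (Suc i)} f \<and> mono_on {p i<..<p (Suc i)} f"
    using f by (auto simp: PC_plus_rc_def PC_plus_def)
  have "continuous_on {a..b} f \<and> strict_mono_on {a..b} f"
    if ab: "0 \<le> a" "a < b" "b < 1" and free: "{a<..b} \<inter> p ` {..n} = {}" for a b
  proof -
    obtain i where i: "i < n" "p i \<le> a" "a < p (Suc i)"
      using partition_cover[of p a n] p0 pn ab by auto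
    have "p (Suc i) \<notin> {a<..b}"
      using free i(1) by auto
    with i have "b < p (Suc i)"
      by auto
    moreover have "inj_on f {a..b}"
      using ab by (auto intro: inj_on_subset[OF inj] simp: XI_iff)
    moreover have "continuous (at_right a) f"
      using rc ab by (simp add: XI_iff)
    ultimately show ?thesis
      using continuous_strict_mono_on_Icc_within_piece[of "p i" "p (Suc i)" f a b]
        pieces ab(2) i by blast
  qed
  moreover have "finite (p ` {..n})" "0 \<in> p ` {..n}"
    using p0 by auto
  ultimately have "rc_breaks (p ` {..n}) f"
    unfolding rc_breaks_def by blast
  then show ?thesis ..
qed

lemma PC_plus_rc_iff: "f \<in> PC_plus_rc \<longleftrightarrow> f \<in> bijX \<and> (\<exists>C. rc_breaks C f)"
  using PC_plus_rc_if_rc_breaks rc_breaks_if_PC_plus_rc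
  unfolding PC_plus_rc_def PC_plus_def PC_bowtie_def by blast

lemma rc_breaks_comp:
  assumes g: "g \<in> bijX" and fC: "rc_breaks Cf f" and gC: "rc_breaks Cg g"
  shows "rc_breaks (Cg \<union> invX g ` Cf) (f \<circ> g)"
proof -
  have "continuous_on {a..b} (f \<circ> g) \<and> strict_mono_on {a..b} (f \<circ> g)"
    if ab: "0 \<le> a" "a < b" "b < 1" and free: "{a<..b} \<inter> (Cg \<union> invX g ` Cf) = {}" for a b
  proof -
    have gc: "continuous_on {a..b} g" and gm: "strict_mono_on {a..b} g"
      using rc_breaksD[OF gC ab] free by auto
    have img: "g ` {a..b} = {g a..g b}"
      using continuous_mono_on_image_Icc[OF gc strict_mono_on_imp_mono_on[OF gm]] ab by simp
    have gab: "0 \<le> g a" "g a < g b" "g b < 1"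
      using bijX_mem[OF g, of a] bijX_mem[OF g, of b] strict_mono_onD[OF gm, of a b] ab
      by (auto simp: XI_iff)
    have "{g a<..g b} \<inter> Cf = {}"
    proof (rule ccontr)
      assume "{g a<..g b} \<inter> Cf \<noteq> {}"
      then obtain v where v: "v \<in> {g a<..g b}" "v \<in> Cf"
        by blast
      then obtain t where "t \<in> {a..b}" "v = g t"
        using img by (metis greaterThanAtMost_iff atLeastAtMost_iff imageE less_imp_le)
      with v have t: "t \<in> {a<..b}"
        by (cases "t = a") auto
      moreover have "invX g v = t"
        using invX_apply[OF g] \<open>v = g t\<close> t ab by (auto simp: XI_iff)
      ultimately have "t \<in> {a<..b} \<inter> invX g ` Cf"
        using v(2) by blast
      with free show False
        by blast
    qed
    then have "continuous_on {g a..g b} f" "strict_mono_on {g a..g b} f"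
      using rc_breaksD[OF fC gab(1,2,3)] by auto
    then show ?thesis
      using continuous_on_compose[OF gc] monotone_on_o[OF _ gm] img by auto
  qed
  moreover have "finite (Cg \<union> invX g ` Cf)" "0 \<in> Cg \<union> invX g ` Cf"
    using fC gC by (auto simp: rc_breaks_def)
  ultimately show ?thesis
    unfolding rc_breaks_def by blast
qed

lemma inj_on_Ico_image_overlap:
  fixes g :: "real \<Rightarrow> real"
  assumes inj: "inj_on g ({w..z} \<union> {x..<c})" and "w < z" and "x < c"
    and cont: "continuous_on {w..z} g" and mono: "strict_mono_on {w..z} g"
    and img: "g ` {x..<c} = {g x..<g z}"
  shows "{w..<z} \<inter> {x..<c} \<noteq> {}"
proof -
  have "g x < g z" "g w < g z"
    using img \<open>x < c\<close> strict_mono_onD[OF mono, of w z] \<open>w < z\<close> by auto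
  define v where "v = (max (g w) (g x) + g z) / 2"
  have "v \<in> g ` {x..<c}"
    using img \<open>g x < g z\<close> \<open>g w < g z\<close> by (auto simp: v_def)
  then obtain s where s: "s \<in> {x..<c}" "g s = v"
    by blast
  have "g w \<le> v" "v < g z"
    using \<open>g x < g z\<close> \<open>g w < g z\<close> by (auto simp: v_def)
  then obtain s' where s': "w \<le> s'" "s' \<le> z" "g s' = v"
    using IVT'[of g w v z] \<open>w < z\<close> cont by auto
  with \<open>v < g z\<close> have "s' \<in> {w..<z}"
    by (cases "s' = z") auto
  moreover have "s = s'"
    using inj_onD[OF inj] s s' by auto
  ultimately show ?thesis
    using s(1) by blast
qed

lemma rc_breaks_piece_end:
  assumes g: "g \<in> bijX" and gC: "rc_breaks C g"
    and "x \<in> XI" "x < c" "c \<le> 1" "c = 1 \<or> c \<in> C"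
    and img: "g ` {x..<c} = {g x..<L}" and "L \<in> XI"
  shows "L \<in> g ` C"
proof (rule ccontr)
  assume "L \<notin> g ` C"
  define z where "z = invX g L"
  have z: "z \<in> XI" "g z = L"
    using invX_mem[OF g] apply_invX[OF g] \<open>L \<in> XI\<close> by (auto simp: z_def)
  with \<open>L \<notin> g ` C\<close> have "z \<notin> C"
    by blast
  have "z \<notin> {x..<c}"
    using img z(2) by auto
  then have side: "z < x \<or> c < z"
    using \<open>z \<notin> C\<close> \<open>c = 1 \<or> c \<in> C\<close> z(1) by (auto simp: XI_iff)
  obtain e where "0 < e" and near: "z \<notin> C \<Longrightarrow>
      0 \<le> z - e \<and> continuous_on {z - e..z + e} g \<and> strict_mono_on {z - e..z + e} g"
    using rc_breaks_near[OF gC z(1)] by blast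
  with \<open>z \<notin> C\<close> have "0 \<le> z - e"
    and cont: "continuous_on {z - e..z + e} g" and mono: "strict_mono_on {z - e..z + e} g"
    by auto
  define w where "w = (if z < x then z - e else max (z - e) c)"
  have w: "z - e \<le> w" "w < z" "{w..<z} \<inter> {x..<c} = {}"
    using side \<open>0 < e\<close> by (auto simp: w_def)
  have "{w..z} \<union> {x..<c} \<subseteq> XI"
    using w(1) \<open>0 \<le> z - e\<close> z(1) \<open>x \<in> XI\<close> \<open>c \<le> 1\<close> by (auto simp: XI_iff)
  then have "inj_on g ({w..z} \<union> {x..<c})"
    using bijX_inj_on[OF g] inj_on_subset by blast
  moreover have "continuous_on {w..z} g" "strict_mono_on {w..z} g"
    using continuous_on_subset[OF cont] monotone_on_subset[OF mono] w(1) by auto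
  ultimately show False
    using inj_on_Ico_image_overlap[of g w z x c] w(2,3) \<open>x < c\<close> img z(2) by blast
qed

lemma rc_breaks_image_piece:
  assumes g: "g \<in> bijX" and gC: "rc_breaks C g" and "x \<in> XI"
    and c: "x < c" "c \<le> 1" "c = 1 \<or> c \<in> C" "{x<..<c} \<inter> C = {}"
  obtains L where "g ` {x..<c} = {g x..<L}" "L \<in> XI \<Longrightarrow> L \<in> g ` C"
proof -
  have piece: "continuous_on {x..t} g \<and> strict_mono_on {x..t} g" if t: "t \<in> {x<..<c}" for t
  proof -
    have "{x<..t} \<subseteq> {x<..<c}"
      using t by auto
    with c(4) have "{x<..t} \<inter> C = {}"
      by blast
    then show ?thesis
      using rc_breaksD[OF gC, of x t] t c(2) \<open>x \<in> XI\<close> by (simp add: XI_iff)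
  qed
  have "{x..<c} \<subseteq> XI"
    using \<open>x \<in> XI\<close> c(2) by (auto simp: XI_iff)
  then have "g ` {x..<c} \<subseteq> {..1}"
    using bijX_mem[OF g] by (force simp: XI_iff)
  then have "bdd_above (g ` {x..<c})"
    by (rule bdd_above_mono[OF bdd_above_Iic])
  then have "g ` {x..<c} = {g x..<Sup (g ` {x..<c})}"
    using strict_mono_image_atLeastLessThan[OF c(1) _ piece] by blast
  with rc_breaks_piece_end[OF g gC \<open>x \<in> XI\<close> c(1-3)] show thesis
    using that by blast
qed

lemma rc_breaks_invX:
  assumes g: "g \<in> bijX" and gC: "rc_breaks C g"
  shows "rc_breaks (insert 0 (g ` C)) (invX g)"
proof -
  have "continuous_on {a..b} (invX g) \<and> strict_mono_on {a..b} (invX g)"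
    if ab: "0 \<le> a" "a < b" "b < 1" and free: "{a<..b} \<inter> insert 0 (g ` C) = {}" for a b
  proof -
    define x where "x = invX g a"
    have x: "x \<in> XI" "g x = a"
      using invX_mem[OF g] apply_invX[OF g] ab by (auto simp: x_def XI_iff)
    obtain c where c: "x < c" "c \<le> 1" "c = 1 \<or> c \<in> C" "{x<..<c} \<inter> C = {}"
      using finite_next_break[of C x] gC x(1) by (auto simp: rc_breaks_def XI_iff)
    obtain L where img: "g ` {x..<c} = {a..<L}" and L: "L \<in> XI \<Longrightarrow> L \<in> g ` C"
      using rc_breaks_image_piece[OF g gC x(1) c] x(2) by metis
    have "a < L"
      using img c(1) x(2) by (metis atLeastLessThan_iff imageI order_refl)
    have "b < L"
    proof (rule ccontr)
      assume "\<not> b < L"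
      with \<open>a < L\<close> ab have "L \<in> {a<..b} \<inter> insert 0 (g ` C)"
        using L by (auto simp: XI_iff)
      with free show False
        by blast
    qed
    with img ab(2) obtain y where y: "y \<in> {x..<c}" "g y = b"
      by (metis atLeastLessThan_iff imageE less_imp_le)
    with x(2) ab(2) have "x < y"
      by (cases "y = x") auto
    have "{x<..y} \<subseteq> {x<..<c}"
      using y(1) by auto
    with c(4) have "{x<..y} \<inter> C = {}"
      by blast
    then have "continuous_on {x..y} g" "strict_mono_on {x..y} g"
      using rc_breaksD[OF gC] x(1) \<open>x < y\<close> y(1) c(2) by (auto simp: XI_iff)
    moreover have "invX g (g t) = t" if "t \<in> {x..y}" for t
      using invX_apply[OF g] that x(1) y(1) c(2) by (simp add: XI_iff)
    ultimately show ?thesis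
      using continuous_strict_mono_on_Icc_inverse[of x y g "invX g"] \<open>x < y\<close> x(2) y(2) by simp
  qed
  moreover have "finite (insert 0 (g ` C))"
    using gC by (simp add: rc_breaks_def)
  ultimately show ?thesis
    unfolding rc_breaks_def by blast
qed

lemma PC_plus_rc_comp: "f \<in> PC_plus_rc \<Longrightarrow> g \<in> PC_plus_rc \<Longrightarrow> f \<circ> g \<in> PC_plus_rc"
  unfolding PC_plus_rc_iff using bijX_comp rc_breaks_comp by blast

lemma PC_plus_rc_invX: "f \<in> PC_plus_rc \<Longrightarrow> invX f \<in> PC_plus_rc"
  unfolding PC_plus_rc_iff using bijX_invX rc_breaks_invX by blast

section \<open>The normalizer\<close>

definition swap_halves :: "real \<Rightarrow> real \<Rightarrow> real \<Rightarrow> real" where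
  "swap_halves u b t =
    (if u \<le> t \<and> t < (u + b) / 2 then t + (b - u) / 2
     else if (u + b) / 2 \<le> t \<and> t < b then t - (b - u) / 2 else t)"

lemma swap_halves_outside: "t \<notin> {u..<b} \<Longrightarrow> swap_halves u b t = t"
  by (auto simp: swap_halves_def)

lemma swap_halves_moves_left_end: "u < b \<Longrightarrow> swap_halves u b u \<noteq> u"
  by (auto simp: swap_halves_def)

lemma swap_halves_PC_plus_rc:
  assumes "0 \<le> u" "u < b" "b \<le> 1"
  shows "swap_halves u b \<in> PC_plus_rc"
proof -
  have invol: "swap_halves u b (swap_halves u b t) = t" for t
    using assms(2) by (auto simp: swap_halves_def field_simps)
  have "swap_halves u b ` XI \<subseteq> XI"
    using assms by (auto simp: swap_halves_def XI_iff field_simps)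
  then have "bij_betw (swap_halves u b) XI XI"
    using invol by (intro bij_betw_byWitness[where f' = "swap_halves u b"]) auto
  moreover have "swap_halves u b t = t" if "t \<notin> XI" for t
    using that assms by (intro swap_halves_outside) (auto simp: XI_iff)
  ultimately have "swap_halves u b \<in> bijX"
    by (simp add: bijX_def)
  moreover have "rc_breaks {0, u, (u + b) / 2, b} (swap_halves u b)"
    unfolding rc_breaks_def
  proof (intro conjI allI impI)
    fix x y :: real
    assume "0 \<le> x" "x < y" "y < 1" and free: "{x<..y} \<inter> {0, u, (u + b) / 2, b} = {}"
    define k where "k = (if x < u then 0 else if x < (u + b) / 2 then (b - u) / 2
      else if x < b then - (b - u) / 2 else 0)"
    have translation: "swap_halves u b t = t + k" if "t \<in> {x..y}" for t
      using that free \<open>x < y\<close> unfolding k_def swap_halves_def by (auto simp: field_simps)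
    have "continuous_on {x..y} (\<lambda>t. t + k)"
      by (intro continuous_intros)
    then show "continuous_on {x..y} (swap_halves u b)"
      by (rule continuous_on_eq) (simp add: translation)
    show "strict_mono_on {x..y} (swap_halves u b)"
      using translation by (auto intro: strict_mono_onI)
  qed simp_all
  ultimately show ?thesis
    by (rule PC_plus_rc_if_rc_breaks)
qed

text \<open>Conjugating back by \<open>g\<close> the swap of the two halves of \<open>[g x, b[\<close> gives some
  \<open>k \<in> PC_plus_rc\<close>. If \<open>g\<close> took no value in \<open>]g x, b[\<close> just right of \<open>x\<close>, then \<open>k\<close>
  would fix every point just right of \<open>x\<close> but move \<open>x\<close>, contradicting right continuity.\<close>

lemma normalizer_right_approach:
  assumes g: "g \<in> bijX" and conj: "PC_plus_rc \<subseteq> (\<lambda>h. g \<circ> h \<circ> invX g) ` PC_plus_rc"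
    and x: "x \<in> XI" and "g x < B" "0 < d"
  shows "\<exists>y. x < y \<and> y < x + d \<and> g x < g y \<and> g y < B"
proof (rule ccontr)
  assume no_approach: "\<nexists>y. x < y \<and> y < x + d \<and> g x < g y \<and> g y < B"
  define b where "b = min B 1"
  have "g x \<in> XI"
    using bijX_mem[OF g x] .
  then have "0 \<le> g x" "g x < b" "b \<le> 1"
    using \<open>g x < B\<close> by (auto simp: b_def XI_iff)
  then obtain k where k: "k \<in> PC_plus_rc" "swap_halves (g x) b = g \<circ> k \<circ> invX g"
    using conj swap_halves_PC_plus_rc[of "g x" b] by blast
  then have "k \<in> bijX"
    by (simp add: PC_plus_rc_iff)
  have swap_g: "swap_halves (g x) b (g t) = g (k t)" if "t \<in> XI" for t
    using invX_apply[OF g that] by (simp add: k(2))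
  have "k t = t" if t: "t \<in> {x<..<x + min d (1 - x)}" for t
  proof -
    have "t \<in> XI"
      using t x by (auto simp: XI_iff)
    then have "g t \<noteq> g x"
      using bijX_eq_iff[OF g _ x] t by auto
    moreover have "\<not> (g x < g t \<and> g t < B)"
      using no_approach t by auto
    ultimately have "g t \<notin> {g x..<b}"
      by (auto simp: b_def)
    then have "g (k t) = g t"
      using swap_g[OF \<open>t \<in> XI\<close>] swap_halves_outside by metis
    then show "k t = t"
      using bijX_eq_iff[OF g bijX_mem[OF \<open>k \<in> bijX\<close> \<open>t \<in> XI\<close>] \<open>t \<in> XI\<close>] by simp
  qed
  moreover have "continuous (at_right x) k" "0 < min d (1 - x)"
    using k(1) x \<open>0 < d\<close> by (auto simp: PC_plus_rc_def XI_iff)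
  ultimately have "k x = x"
    using right_continuous_fixed_point by blast
  then have "swap_halves (g x) b (g x) = g x"
    using swap_g[OF x] by simp
  with \<open>g x < b\<close> show False
    using swap_halves_moves_left_end by blast
qed

lemma normalizer_subset_PC_plus_rc: "normalizerX PC_bowtie PC_plus_rc \<subseteq> PC_plus_rc"
proof
  fix g assume "g \<in> normalizerX PC_bowtie PC_plus_rc"
  then have g: "g \<in> bijX" and conj: "PC_plus_rc \<subseteq> (\<lambda>h. g \<circ> h \<circ> invX g) ` PC_plus_rc"
    by (auto simp: normalizerX_def PC_bowtie_def)
  obtain F where "finite F" and cont: "\<forall>x \<in> XI - F. continuous (at x within XI) g"
    using \<open>g \<in> normalizerX PC_bowtie PC_plus_rc\<close> by (auto simp: normalizerX_def PC_bowtie_def)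
  have "continuous_on {a..b} g \<and> strict_mono_on {a..b} g"
    if ab: "0 \<le> a" "a < b" "b < 1" and free: "{a<..b} \<inter> insert 0 F = {}" for a b
  proof -
    have sub: "{a..b} \<subseteq> XI"
      using ab by (auto simp: XI_iff)
    have "continuous (at x within {a..b}) g" if "x \<in> {a<..b}" for x
    proof -
      have "x \<in> XI - F"
        using that free sub by auto
      then show ?thesis
        using cont continuous_within_subset[OF _ sub] by blast
    qed
    moreover have "\<exists>y. x < y \<and> y < x + d \<and> g x < g y \<and> g y < B"
      if "x \<in> {a..<b}" "g x < B" "0 < d" for x B d
      using normalizer_right_approach[OF g conj subsetD[OF sub] that(2,3)] that(1) by auto
    ultimately show ?thesis
      using continuous_strict_mono_on_Icc_if_right_approach[OF \<open>a < b\<close>]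
        inj_on_subset[OF bijX_inj_on[OF g] sub] by blast
  qed
  moreover have "finite (insert 0 F)"
    using \<open>finite F\<close> by simp
  ultimately have "rc_breaks (insert 0 F) g"
    unfolding rc_breaks_def by blast
  with g show "g \<in> PC_plus_rc"
    by (rule PC_plus_rc_if_rc_breaks)
qed

theorem proposition5p4:
  shows "normalizerX PC_bowtie PC_plus_rc = PC_plus_rc"
proof
  show "normalizerX PC_bowtie PC_plus_rc \<subseteq> PC_plus_rc"
    by (rule normalizer_subset_PC_plus_rc)
  show "PC_plus_rc \<subseteq> normalizerX PC_bowtie PC_plus_rc"
  proof
    fix g assume "g \<in> PC_plus_rc"
    moreover have "PC_plus_rc \<subseteq> bijX"
      by (auto simp: PC_plus_rc_iff)
    ultimately have "(\<lambda>h. g \<circ> h \<circ> invX g) ` PC_plus_rc = PC_plus_rc"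
      using conjugation_image_eq PC_plus_rc_comp PC_plus_rc_invX by blast
    moreover have "g \<in> PC_bowtie"
      using \<open>g \<in> PC_plus_rc\<close> by (simp add: PC_plus_rc_def PC_plus_def)
    ultimately show "g \<in> normalizerX PC_bowtie PC_plus_rc"
      by (simp add: normalizerX_def)
  qed
qed

end
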